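(* Let $\mathcal{B}=(T,\bowtie)$ be a block and let $\mathcal S,\mathcal S'$ be two valid schedules of $\mathcal{B}$ such that for all $tx_a,tx_b\in T$ with $tx_a\bowtie tx_b$: if $(T,\mathcal S)$ contains a directed path from $tx_a$ to $tx_b$, then $(T,\mathcal S')$ contains a directed path from $tx_a$ to $tx_b$. Then all executions of $GBR$ on $\mathcal S$ and on $\mathcal S'$ are equivalent, i.e., for every initial global state, every execution of $GBR$ on $\mathcal S$ and every execution of $GBR$ on $\mathcal S'$ from that state produce the same result for every transaction and the same final global state.
   Context: A block is a finite set $T$ of transactions. Each transaction $tx$ is deterministic (its effect and result depend only on its inputs and the values it reads) and has a read-set $R(tx)$ and write-set $W(tx)$ containing all objects of the global state it may read, respectively write. Distinct $tx_1,tx_2$ conflict ($tx_1\bowtie tx_2$) if $R(tx_1)\cap W(tx_2)$, $W(tx_1)\cap R(tx_2)$ or $W(tx_1)\cap W(tx_2)$ is nonempty. A schedule is a set $\mathcal S\subseteq T\times T$ with $(T,\mathcal S)$ acyclic; it is valid if every conflicting pair is joined by a directed path in $(T,\mathcal S)$ in one direction or the other. The scheduler $GBR$ executes a schedule $\mathcal S$ by running each transaction in its own thread; the thread of $tx$ waits until every $tx'$ with $(tx',tx)\in\mathcal S$ has finished, then reads the latest version of the objects in $R(tx)$, executes $tx$, stores the new values of $W(tx)$, emits its result and signals its out-neighbours; otherwise transactions may run concurrently. *)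

theory Defs
  imports Main
begin

text \<open>Transactions of type 't act on a global state of type 'o \<Rightarrow> 'v (objects to values).
  Each transaction t has read set R t and write set W t.  Its behaviour is given by
  eff t \<sigma>, the values it writes (only the values at objects in W t are stored), and
  res t \<sigma>, its result, where \<sigma> is the state it has read.\<close>

definition conflict :: "('t \<Rightarrow> 'o set) \<Rightarrow> ('t \<Rightarrow> 'o set) \<Rightarrow> 't \<Rightarrow> 't \<Rightarrow> bool" where
  "conflict R W t1 t2 \<longleftrightarrow> t1 \<noteq> t2 \<and>
     (R t1 \<inter> W t2 \<noteq> {} \<or> W t1 \<inter> R t2 \<noteq> {} \<or> W t1 \<inter> W t2 \<noteq> {})"

definition deterministic ::
  "('t \<Rightarrow> 'o set) \<Rightarrow> ('t \<Rightarrow> ('o \<Rightarrow> 'v) \<Rightarrow> ('o \<Rightarrow> 'v)) \<Rightarrow> ('t \<Rightarrow> ('o \<Rightarrow> 'v) \<Rightarrow> 'r) \<Rightarrow> bool" where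
  "deterministic R eff res \<longleftrightarrow>
     (\<forall>t \<sigma> \<sigma>'. (\<forall>x\<in>R t. \<sigma> x = \<sigma>' x) \<longrightarrow> eff t \<sigma> = eff t \<sigma>' \<and> res t \<sigma> = res t \<sigma>')"

definition schedule :: "'t set \<Rightarrow> ('t \<times> 't) set \<Rightarrow> bool" where
  "schedule T S \<longleftrightarrow> S \<subseteq> T \<times> T \<and> acyclic S"

definition valid_schedule :: "('t \<Rightarrow> 'o set) \<Rightarrow> ('t \<Rightarrow> 'o set) \<Rightarrow> 't set \<Rightarrow> ('t \<times> 't) set \<Rightarrow> bool" where
  "valid_schedule R W T S \<longleftrightarrow> schedule T S \<and>
     (\<forall>a\<in>T. \<forall>b\<in>T. conflict R W a b \<longrightarrow> (a, b) \<in> S\<^sup>+ \<or> (b, a) \<in> S\<^sup>+)"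

text \<open>Events of a GBR execution: the thread of t reads (a snapshot of) the current state,
  and later stores its written values (and then signals completion).\<close>
datatype 't event = Rd 't | Wr 't

definition gbr_trace :: "'t set \<Rightarrow> ('t \<times> 't) set \<Rightarrow> 't event list \<Rightarrow> bool" where
  "gbr_trace T S es \<longleftrightarrow> distinct es \<and> set es = Rd ` T \<union> Wr ` T \<and>
     (\<forall>t\<in>T. \<forall>i j. i < length es \<and> j < length es \<and> es ! i = Rd t \<and> es ! j = Wr t \<longrightarrow> i < j) \<and>
     (\<forall>(a, b)\<in>S. \<forall>i j. i < length es \<and> j < length es \<and> es ! i = Wr a \<and> es ! j = Rd b \<longrightarrow> i < j)"

text \<open>Running a trace: state = (global state, state read by each transaction).\<close>
fun gbr_run :: "('t \<Rightarrow> 'o set) \<Rightarrow> ('t \<Rightarrow> ('o \<Rightarrow> 'v) \<Rightarrow> ('o \<Rightarrow> 'v)) \<Rightarrow> 't event list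
    \<Rightarrow> ('o \<Rightarrow> 'v) \<Rightarrow> ('t \<Rightarrow> ('o \<Rightarrow> 'v)) \<Rightarrow> ('o \<Rightarrow> 'v) \<times> ('t \<Rightarrow> ('o \<Rightarrow> 'v))" where
  "gbr_run W eff [] \<sigma> rd = (\<sigma>, rd)"
| "gbr_run W eff (Rd t # es) \<sigma> rd = gbr_run W eff es \<sigma> (rd(t := \<sigma>))"
| "gbr_run W eff (Wr t # es) \<sigma> rd =
     gbr_run W eff es (\<lambda>x. if x \<in> W t then eff t (rd t) x else \<sigma> x) rd"

definition gbr_final :: "('t \<Rightarrow> 'o set) \<Rightarrow> ('t \<Rightarrow> ('o \<Rightarrow> 'v) \<Rightarrow> ('o \<Rightarrow> 'v)) \<Rightarrow> 't event list
    \<Rightarrow> ('o \<Rightarrow> 'v) \<Rightarrow> ('o \<Rightarrow> 'v)" where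
  "gbr_final W eff es \<sigma>0 = fst (gbr_run W eff es \<sigma>0 (\<lambda>_. \<sigma>0))"

definition gbr_result :: "('t \<Rightarrow> 'o set) \<Rightarrow> ('t \<Rightarrow> ('o \<Rightarrow> 'v) \<Rightarrow> ('o \<Rightarrow> 'v)) \<Rightarrow> ('t \<Rightarrow> ('o \<Rightarrow> 'v) \<Rightarrow> 'r)
    \<Rightarrow> 't event list \<Rightarrow> ('o \<Rightarrow> 'v) \<Rightarrow> 't \<Rightarrow> 'r" where
  "gbr_result W eff res es \<sigma>0 t = res t (snd (gbr_run W eff es \<sigma>0 (\<lambda>_. \<sigma>0)) t)"

end

theory Submission
  imports Defs
begin

text \<open>An execution of GBR is an interleaving of read and write events. Two adjacent events
  that are independent (no read/write or write/write overlap, and not the read and write of the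
  same transaction) can be swapped without changing the global state or what any transaction
  sees on its read set. In a trace of a valid schedule the relative order of two dependent
  events of distinct transactions is forced by the path between them in the schedule, and the
  hypothesis transfers these paths from S to S'. Hence both traces order all dependent events
  alike, and one is obtained from the other by swapping independent events.\<close>

fun event_tx :: "'t event \<Rightarrow> 't" where
  "event_tx (Rd t) = t"
| "event_tx (Wr t) = t"

lemma event_of_event_tx: "e \<in> {Rd (event_tx e), Wr (event_tx e)}"
  by (cases e) auto

fun dependent :: "('t \<Rightarrow> 'o set) \<Rightarrow> ('t \<Rightarrow> 'o set) \<Rightarrow> 't event \<Rightarrow> 't event \<Rightarrow> bool" where
  "dependent R W (Rd a) (Rd b) = False"
| "dependent R W (Rd a) (Wr b) = (a = b \<or> R a \<inter> W b \<noteq> {})"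
| "dependent R W (Wr a) (Rd b) = (a = b \<or> W a \<inter> R b \<noteq> {})"
| "dependent R W (Wr a) (Wr b) = (W a \<inter> W b \<noteq> {})"

lemma dependent_sym: "dependent R W e f \<Longrightarrow> dependent R W f e"
  by (cases e; cases f) auto

lemma dependent_conflict:
  "dependent R W e f \<Longrightarrow> event_tx e \<noteq> event_tx f \<Longrightarrow> conflict R W (event_tx e) (event_tx f)"
  by (cases e; cases f) (auto simp: conflict_def)

fun before :: "'a list \<Rightarrow> 'a \<Rightarrow> 'a \<Rightarrow> bool" where
  "before [] a b = False"
| "before (x # xs) a b = ((x = a \<and> b \<in> set xs) \<or> before xs a b)"

lemma before_set: "before xs a b \<Longrightarrow> a \<in> set xs \<and> b \<in> set xs"
  by (induction xs) auto

lemma before_append: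
  "before (us @ vs) a b \<longleftrightarrow> before us a b \<or> (a \<in> set us \<and> b \<in> set vs) \<or> before vs a b"
  by (induction us) auto

lemma before_asym: "distinct xs \<Longrightarrow> before xs a b \<Longrightarrow> \<not> before xs b a"
  by (induction xs) (auto dest: before_set)

lemma before_trans: "distinct xs \<Longrightarrow> before xs a b \<Longrightarrow> before xs b c \<Longrightarrow> before xs a c"
  by (induction xs) (auto dest: before_set)

lemma before_nth: "i < j \<Longrightarrow> j < length xs \<Longrightarrow> before xs (xs ! i) (xs ! j)"
proof (induction xs arbitrary: i j)
  case Nil
  then show ?case by simp
next
  case (Cons x xs)
  then obtain j' where j: "j = Suc j'"
    by (cases j) auto
  show ?case
    using Cons j by (cases i) auto
qed

lemma before_if_indices_ordered:
  assumes "a \<in> set xs" and "b \<in> set xs"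
    and "\<forall>i j. i < length xs \<and> j < length xs \<and> xs ! i = a \<and> xs ! j = b \<longrightarrow> i < j"
  shows "before xs a b"
proof -
  obtain i j where "i < length xs" "xs ! i = a" "j < length xs" "xs ! j = b"
    using assms(1,2) by (metis in_set_conv_nth)
  with assms(3) show ?thesis
    using before_nth by metis
qed

definition run_equiv ::
  "('t \<Rightarrow> 'o set) \<Rightarrow> ('o \<Rightarrow> 'v) \<times> ('t \<Rightarrow> ('o \<Rightarrow> 'v)) \<Rightarrow> ('o \<Rightarrow> 'v) \<times> ('t \<Rightarrow> ('o \<Rightarrow> 'v)) \<Rightarrow> bool"
  where "run_equiv R p q \<longleftrightarrow> fst p = fst q \<and> (\<forall>t. \<forall>x\<in>R t. snd p t x = snd q t x)"

lemma run_equiv_refl: "run_equiv R p p"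
  by (simp add: run_equiv_def)

lemma run_equiv_sym: "run_equiv R p q \<Longrightarrow> run_equiv R q p"
  by (simp add: run_equiv_def)

lemma run_equiv_trans: "run_equiv R p q \<Longrightarrow> run_equiv R q r \<Longrightarrow> run_equiv R p r"
  by (simp add: run_equiv_def)

lemma gbr_run_cong_reads:
  assumes det: "deterministic R eff res"
    and "\<forall>t. \<forall>x\<in>R t. rd t x = rd' t x"
  shows "run_equiv R (gbr_run W eff es \<sigma> rd) (gbr_run W eff es \<sigma> rd')"
  using assms(2)
proof (induction es arbitrary: \<sigma> rd rd')
  case Nil
  then show ?case by (simp add: run_equiv_def)
next
  case (Cons e es)
  show ?case
  proof (cases e)
    case (Rd t)
    then show ?thesis using Cons by simp
  next
    case (Wr t)
    have "eff t (rd t) = eff t (rd' t)"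
      using det Cons.prems unfolding deterministic_def by blast
    then show ?thesis
      using Cons.IH[OF Cons.prems] Wr by (simp only: gbr_run.simps)
  qed
qed

lemma gbr_run_Cons_ex: "\<exists>\<sigma>' rd'. \<forall>es. gbr_run W eff (e # es) \<sigma> rd = gbr_run W eff es \<sigma>' rd'"
  by (cases e) auto

lemma gbr_run_swap:
  assumes det: "deterministic R eff res" and indep: "\<not> dependent R W e f" and "e \<noteq> f"
  shows "run_equiv R (gbr_run W eff (e # f # es) \<sigma> rd) (gbr_run W eff (f # e # es) \<sigma> rd)"
proof -
  have read_write: "run_equiv R (gbr_run W eff (Rd a # Wr b # es) \<sigma> rd)
      (gbr_run W eff (Wr b # Rd a # es) \<sigma> rd)"
    if "a \<noteq> b" and "R a \<inter> W b = {}" for a b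
  proof -
    define \<sigma>' where "\<sigma>' = (\<lambda>x. if x \<in> W b then eff b (rd b) x else \<sigma> x)"
    have "\<forall>t. \<forall>x\<in>R t. (rd(a := \<sigma>)) t x = (rd(a := \<sigma>')) t x"
      using that(2) by (auto simp: \<sigma>'_def)
    then have "run_equiv R (gbr_run W eff es \<sigma>' (rd(a := \<sigma>))) (gbr_run W eff es \<sigma>' (rd(a := \<sigma>')))"
      by (rule gbr_run_cong_reads[OF det])
    moreover have "(rd(a := \<sigma>)) b = rd b"
      using that(1) by simp
    ultimately show ?thesis
      unfolding \<sigma>'_def by (simp only: gbr_run.simps)
  qed
  show ?thesis
  proof (cases e; cases f)
    fix a b
    assume "e = Rd a" "f = Rd b"
    then show ?thesis
      using \<open>e \<noteq> f\<close> by (simp add: fun_upd_twist run_equiv_refl)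
  next
    fix a b
    assume "e = Rd a" "f = Wr b"
    then show ?thesis
      using indep read_write by auto
  next
    fix a b
    assume "e = Wr a" "f = Rd b"
    then show ?thesis
      using indep read_write run_equiv_sym by (metis dependent.simps(3) disjoint_iff)
  next
    fix a b
    assume "e = Wr a" "f = Wr b"
    then have "W a \<inter> W b = {}"
      using indep by simp
    then have "(\<lambda>x. if x \<in> W b then eff b (rd b) x else if x \<in> W a then eff a (rd a) x else \<sigma> x)
        = (\<lambda>x. if x \<in> W a then eff a (rd a) x else if x \<in> W b then eff b (rd b) x else \<sigma> x)"
      by (intro ext) auto
    then show ?thesis
      using \<open>e = Wr a\<close> \<open>f = Wr b\<close> by (simp add: run_equiv_refl)
  qed
qed

lemma gbr_run_move_to_front:
  assumes det: "deterministic R eff res"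
    and "\<forall>u\<in>set us. \<not> dependent R W e u \<and> u \<noteq> e"
  shows "run_equiv R (gbr_run W eff (us @ e # es) \<sigma> rd) (gbr_run W eff (e # us @ es) \<sigma> rd)"
  using assms(2)
proof (induction us arbitrary: \<sigma> rd)
  case Nil
  then show ?case by (simp add: run_equiv_refl)
next
  case (Cons u us)
  obtain \<sigma>' rd' where step: "\<forall>es. gbr_run W eff (u # es) \<sigma> rd = gbr_run W eff es \<sigma>' rd'"
    using gbr_run_Cons_ex by blast
  have "run_equiv R (gbr_run W eff (u # us @ e # es) \<sigma> rd) (gbr_run W eff (u # e # us @ es) \<sigma> rd)"
    using Cons step by simp
  moreover have "run_equiv R (gbr_run W eff (u # e # us @ es) \<sigma> rd) (gbr_run W eff (e # u # us @ es) \<sigma> rd)"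
    using Cons.prems by (intro gbr_run_swap[OF det]) (auto dest: dependent_sym)
  ultimately show ?case
    by (simp add: run_equiv_trans)
qed

lemma gbr_run_reorder:
  assumes det: "deterministic R eff res"
    and "distinct xs" and "distinct ys" and "set xs = set ys"
    and "\<forall>e f. dependent R W e f \<longrightarrow> before xs e f \<longrightarrow> before ys e f"
  shows "run_equiv R (gbr_run W eff xs \<sigma> rd) (gbr_run W eff ys \<sigma> rd)"
  using assms(2-)
proof (induction xs arbitrary: ys \<sigma> rd)
  case Nil
  then show ?case by (simp add: run_equiv_refl)
next
  case (Cons x xs)
  obtain us vs where ys: "ys = us @ x # vs"
    using Cons.prems(3) by (metis list.set_intros(1) split_list)
  have x_new: "x \<notin> set xs" "x \<notin> set us" "x \<notin> set vs"
    using Cons.prems(1,2) ys by auto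
  have "\<not> dependent R W x u" if u: "u \<in> set us" for u
  proof
    assume "dependent R W x u"
    moreover have "before (x # xs) x u"
      using u x_new Cons.prems(3) ys by auto
    ultimately have "before ys x u"
      using Cons.prems(4) by blast
    moreover have "before ys u x"
      using u ys by (simp add: before_append)
    ultimately show False
      using before_asym[OF Cons.prems(2)] by blast
  qed
  then have front: "run_equiv R (gbr_run W eff ys \<sigma> rd) (gbr_run W eff (x # us @ vs) \<sigma> rd)"
    unfolding ys using x_new(2) by (intro gbr_run_move_to_front[OF det]) auto
  have "set xs = set (us @ vs)"
    using Cons.prems(3) x_new ys by auto
  moreover have "\<forall>e f. dependent R W e f \<longrightarrow> before xs e f \<longrightarrow> before (us @ vs) e f"
  proof (intro allI impI)
    fix e f
    assume "dependent R W e f" and xs_ef: "before xs e f"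
    then have "before ys e f"
      using Cons.prems(4) by simp
    moreover have "e \<noteq> x" "f \<noteq> x"
      using before_set[OF xs_ef] x_new(1) by auto
    ultimately show "before (us @ vs) e f"
      unfolding ys by (auto simp: before_append)
  qed
  moreover obtain \<sigma>' rd' where step: "\<forall>es. gbr_run W eff (x # es) \<sigma> rd = gbr_run W eff es \<sigma>' rd'"
    using gbr_run_Cons_ex by blast
  ultimately have "run_equiv R (gbr_run W eff (x # xs) \<sigma> rd) (gbr_run W eff (x # us @ vs) \<sigma> rd)"
    using Cons.IH Cons.prems(1,2) ys by simp
  then show ?case
    using front run_equiv_sym run_equiv_trans by blast
qed

lemma gbr_trace_distinct: "gbr_trace T S es \<Longrightarrow> distinct es"
  by (simp add: gbr_trace_def)

lemma gbr_trace_read_before_write: "gbr_trace T S es \<Longrightarrow> t \<in> T \<Longrightarrow> before es (Rd t) (Wr t)"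
  unfolding gbr_trace_def by (intro before_if_indices_ordered) auto

lemma gbr_trace_edge:
  "gbr_trace T S es \<Longrightarrow> S \<subseteq> T \<times> T \<Longrightarrow> (a, b) \<in> S \<Longrightarrow> before es (Wr a) (Rd b)"
  unfolding gbr_trace_def by (intro before_if_indices_ordered) auto

lemma gbr_trace_path:
  assumes tr: "gbr_trace T S es" and "S \<subseteq> T \<times> T" and "(a, b) \<in> S\<^sup>+"
  shows "before es (Wr a) (Rd b)"
  using assms(3)
proof (induction rule: trancl.induct)
  case (r_into_trancl a b)
  then show ?case using gbr_trace_edge[OF tr assms(2)] by blast
next
  case (trancl_into_trancl a b c)
  have "before es (Rd b) (Wr b)"
    using trancl_into_trancl(2) assms(2) gbr_trace_read_before_write[OF tr] by blast
  moreover have "before es (Wr b) (Rd c)"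
    using gbr_trace_edge[OF tr assms(2) trancl_into_trancl(2)] .
  ultimately show ?case
    using trancl_into_trancl(3) before_trans[OF gbr_trace_distinct[OF tr]] by metis
qed

lemma gbr_trace_path_events:
  assumes tr: "gbr_trace T S es" and "S \<subseteq> T \<times> T" and "(a, b) \<in> S\<^sup>+"
    and "a \<in> T" "b \<in> T" and "e \<in> {Rd a, Wr a}" and "f \<in> {Rd b, Wr b}"
  shows "before es e f"
proof -
  note trans = before_trans[OF gbr_trace_distinct[OF tr]]
  have "before es (Rd a) (Wr a)" "before es (Rd b) (Wr b)"
    using gbr_trace_read_before_write[OF tr] assms(4,5) by auto
  moreover have "before es (Wr a) (Rd b)"
    using gbr_trace_path[OF tr assms(2,3)] .
  ultimately show ?thesis
    using assms(6,7) trans by blast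
qed

lemma gbr_trace_dependent_order:
  assumes tr: "gbr_trace T S es" and tr': "gbr_trace T S' es'"
    and val: "valid_schedule R W T S" and "S' \<subseteq> T \<times> T"
    and paths: "\<forall>a\<in>T. \<forall>b\<in>T. conflict R W a b \<longrightarrow> (a, b) \<in> S\<^sup>+ \<longrightarrow> (a, b) \<in> S'\<^sup>+"
    and dep: "dependent R W e f" and es_ef: "before es e f"
  shows "before es' e f"
proof -
  have sub: "S \<subseteq> T \<times> T"
    using val by (simp add: valid_schedule_def schedule_def)
  have "e \<in> set es" "f \<in> set es"
    using before_set[OF es_ef] by auto
  then have a: "event_tx e \<in> T" and b: "event_tx f \<in> T"
    using tr by (auto simp: gbr_trace_def)
  show ?thesis
  proof (cases "event_tx e = event_tx f")
    case True
    have "e \<noteq> f"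
      using before_asym[OF gbr_trace_distinct[OF tr] es_ef] es_ef by blast
    with True have "e = Rd (event_tx e) \<and> f = Wr (event_tx e)"
      using event_of_event_tx[of e] event_of_event_tx[of f] gbr_trace_read_before_write[OF tr a]
        before_asym[OF gbr_trace_distinct[OF tr] es_ef] by auto
    then show ?thesis
      using gbr_trace_read_before_write[OF tr' a] by metis
  next
    case False
    then have c: "conflict R W (event_tx e) (event_tx f)"
      using dependent_conflict[OF dep] by blast
    have "(event_tx e, event_tx f) \<in> S\<^sup>+"
    proof (rule ccontr)
      assume "(event_tx e, event_tx f) \<notin> S\<^sup>+"
      then have "(event_tx f, event_tx e) \<in> S\<^sup>+"
        using val a b c by (auto simp: valid_schedule_def)
      then have "before es f e"
        using gbr_trace_path_events[OF tr sub _ b a event_of_event_tx event_of_event_tx] by blast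
      then show False
        using before_asym[OF gbr_trace_distinct[OF tr] es_ef] by blast
    qed
    then have "(event_tx e, event_tx f) \<in> S'\<^sup>+"
      using paths a b c by blast
    then show ?thesis
      using gbr_trace_path_events[OF tr' assms(4) _ a b event_of_event_tx event_of_event_tx] by blast
  qed
qed

theorem lemma2:
  fixes T :: "'t set" and R W :: "'t \<Rightarrow> 'o set"
    and eff :: "'t \<Rightarrow> ('o \<Rightarrow> 'v) \<Rightarrow> ('o \<Rightarrow> 'v)" and res :: "'t \<Rightarrow> ('o \<Rightarrow> 'v) \<Rightarrow> 'r"
    and S S' :: "('t \<times> 't) set"
  assumes "finite T"
    and "deterministic R eff res"
    and "valid_schedule R W T S"
    and "valid_schedule R W T S'"
    and "\<forall>a\<in>T. \<forall>b\<in>T. conflict R W a b \<longrightarrow> (a, b) \<in> S\<^sup>+ \<longrightarrow> (a, b) \<in> S'\<^sup>+"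
  shows "\<forall>\<sigma>0 es es'. gbr_trace T S es \<longrightarrow> gbr_trace T S' es' \<longrightarrow>
           gbr_final W eff es \<sigma>0 = gbr_final W eff es' \<sigma>0 \<and>
           (\<forall>t\<in>T. gbr_result W eff res es \<sigma>0 t = gbr_result W eff res es' \<sigma>0 t)"
proof (intro allI impI)
  fix \<sigma>0 es es'
  assume tr: "gbr_trace T S es" and tr': "gbr_trace T S' es'"
  have "S' \<subseteq> T \<times> T"
    using assms(4) by (simp add: valid_schedule_def schedule_def)
  then have "\<forall>e f. dependent R W e f \<longrightarrow> before es e f \<longrightarrow> before es' e f"
    using gbr_trace_dependent_order[OF tr tr' assms(3)] assms(5) by blast
  moreover have "distinct es" "distinct es'" "set es = set es'"
    using tr tr' by (auto simp: gbr_trace_def)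
  ultimately have "run_equiv R (gbr_run W eff es \<sigma>0 (\<lambda>_. \<sigma>0)) (gbr_run W eff es' \<sigma>0 (\<lambda>_. \<sigma>0))"
    using gbr_run_reorder[OF assms(2)] by blast
  then show "gbr_final W eff es \<sigma>0 = gbr_final W eff es' \<sigma>0 \<and>
      (\<forall>t\<in>T. gbr_result W eff res es \<sigma>0 t = gbr_result W eff res es' \<sigma>0 t)"
    using assms(2) unfolding run_equiv_def gbr_final_def gbr_result_def deterministic_def by blast
qed

end
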